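(* Let $\mathcal{R}$ be a ring and $(\mathcal{C}^{\bullet},\partial)$ a bigraded cochain complex of $\mathcal{R}$-modules as in the context. For each $p,q\in\mathbb{Z}$ with $p+q=k$ there is a commutative diagram with exact rows and exact columns whose rows are \[ 0\to\mathcal{B}^{k}_{q}\cap\mathcal{C}^{p,q}\hookrightarrow\mathcal{B}^{k}_{q}\xrightarrow{\pi_{q+1}}\mathcal{B}^{k}_{q+1}\to0, \qquad 0\to\mathcal{Z}^{k}_{q}\cap\mathcal{C}^{p,q}\hookrightarrow\mathcal{Z}^{k}_{q}\xrightarrow{\pi_{q+1}}\mathcal{Z}^{k}_{q+1}\to0, \] \[ 0\to\frac{\mathcal{Z}^{k}_{q}\cap\mathcal{C}^{p,q}}{\mathcal{B}^{k}_{q}\cap\mathcal{C}^{p,q}}\to\frac{\mathcal{Z}^{k}_{q}}{\mathcal{B}^{k}_{q}}\xrightarrow{\bar\pi_{q+1}}\frac{\mathcal{Z}^{k}_{q+1}}{\mathcal{B}^{k}_{q+1}}\to0, \] (listed top, middle, bottom), where the vertical maps from the top to the middle row are inclusions, those from the middle to the bottom row are the canonical projections, and the bottom row maps are induced. (Here $\mathcal{Z}^{k}_{0}=Z^{k}(\mathcal{C},\partial)$ and $\mathcal{B}^{k}_{0}=B^{k}(\mathcal{C},\partial)$.)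
   Context: Setting: $\mathcal{C}^{k}=\bigoplus_{p+q=k}\mathcal{C}^{p,q}$ with $\mathcal{C}^{p,q}=\{0\}$ if $p<0$ or $q<0$; $\partial$ is $\mathcal{R}$-linear of degree $1$, $\partial^{2}=0$, $\partial=\partial_{2,-1}+\partial_{1,0}+\partial_{0,1}$ with $\partial_{i,j}(\mathcal{C}^{p,q})\subseteq\mathcal{C}^{p+i,q+j}$. $G^{q}\mathcal{C}:=\bigoplus_{j\geq q}\mathcal{C}^{i,j}$ and $\pi_{q}:\mathcal{C}\to G^{q}\mathcal{C}$ is the projection along the bigrading. $\mathcal{N}^{p,q}:=\ker(\partial_{0,1}|_{\mathcal{C}^{p,q}})\cap\ker(\partial_{2,-1}|_{\mathcal{C}^{p,q}})$, $\mathcal{N}_{q}:=\bigoplus_{p}\mathcal{N}^{p-q,q}$ (degree-$m$ part $\mathcal{N}^{m-q,q}$), a subcomplex of $(\mathcal{C},\partial)$ with differential $\overline{\partial}:=\partial|_{\mathcal{N}_q}$. For $\eta\in\mathcal{C}^k$, $(\partial\eta)_{i,j}$ is the $\mathcal{C}^{i,j}$-component of $\partial\eta$. $\mathcal{M}^{k}:=\{\eta\in\mathcal{C}^{k}\mid(\partial\eta)_{i,j}\in B^{k+1}(\mathcal{N}_{j},\overline{\partial})\ \forall\, i+j=k+1\}$; $\mathcal{Z}^{k}_{q}:=\{\pi_{q}(\eta)\mid\eta\in\mathcal{M}^{k},\ \pi_{q}(\partial\eta)=0\}$; $\mathcal{B}^{k}_{q}:=\pi_{q}(B^{k}(\mathcal{C},\partial))$.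 *)

theory Defs
  imports Main "HOL-Library.Function_Algebras"
begin

text \<open>Elements of the total complex C are families x p q with x p q in C^{p,q},
  finitely supported (the direct sum). The modules C^{p,q} are R-submodules A p q of an
  ambient left R-module 'm.\<close>

definition left_module :: "('r::ring_1 \<Rightarrow> 'm::ab_group_add \<Rightarrow> 'm) \<Rightarrow> bool" where
  "left_module sc \<longleftrightarrow>
     (\<forall>r x y. sc r (x + y) = sc r x + sc r y) \<and>
     (\<forall>r s x. sc (r + s) x = sc r x + sc s x) \<and>
     (\<forall>r s x. sc (r * s) x = sc r (sc s x)) \<and>
     (\<forall>x. sc 1 x = x)"

definition is_submod :: "('r \<Rightarrow> 'm::ab_group_add \<Rightarrow> 'm) \<Rightarrow> 'm set \<Rightarrow> bool" where
  "is_submod sc S \<longleftrightarrow> 0 \<in> S \<and> (\<forall>x\<in>S. \<forall>y\<in>S. x + y \<in> S) \<and> (\<forall>r. \<forall>x\<in>S. sc r x \<in> S)"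

definition lscale :: "('r \<Rightarrow> 'm \<Rightarrow> 'm) \<Rightarrow> 'r \<Rightarrow> (int \<Rightarrow> int \<Rightarrow> 'm) \<Rightarrow> (int \<Rightarrow> int \<Rightarrow> 'm)" where
  "lscale sc r x = (\<lambda>i j. sc r (x i j))"

definition carrierC :: "(int \<Rightarrow> int \<Rightarrow> 'm::zero set) \<Rightarrow> (int \<Rightarrow> int \<Rightarrow> 'm) set" where
  "carrierC A = {x. (\<forall>p q. x p q \<in> A p q) \<and> finite {(p, q). x p q \<noteq> 0}}"

definition Ck :: "(int \<Rightarrow> int \<Rightarrow> 'm::zero set) \<Rightarrow> int \<Rightarrow> (int \<Rightarrow> int \<Rightarrow> 'm) set" where
  "Ck A k = {x \<in> carrierC A. \<forall>p q. p + q \<noteq> k \<longrightarrow> x p q = 0}"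

definition Cpq :: "(int \<Rightarrow> int \<Rightarrow> 'm::zero set) \<Rightarrow> int \<Rightarrow> int \<Rightarrow> (int \<Rightarrow> int \<Rightarrow> 'm) set" where
  "Cpq A p q = {x \<in> carrierC A. \<forall>i j. (i, j) \<noteq> (p, q) \<longrightarrow> x i j = 0}"

definition comp :: "(int \<Rightarrow> int \<Rightarrow> 'm::zero) \<Rightarrow> int \<Rightarrow> int \<Rightarrow> (int \<Rightarrow> int \<Rightarrow> 'm)" where
  "comp x i j = (\<lambda>a b. if a = i \<and> b = j then x i j else 0)"

definition proj :: "int \<Rightarrow> (int \<Rightarrow> int \<Rightarrow> 'm::zero) \<Rightarrow> (int \<Rightarrow> int \<Rightarrow> 'm)" where
  "proj q x = (\<lambda>i j. if q \<le> j then x i j else 0)"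

definition lin_on :: "('r \<Rightarrow> 'm::ab_group_add \<Rightarrow> 'm) \<Rightarrow> (int \<Rightarrow> int \<Rightarrow> 'm set)
    \<Rightarrow> ((int \<Rightarrow> int \<Rightarrow> 'm) \<Rightarrow> (int \<Rightarrow> int \<Rightarrow> 'm)) \<Rightarrow> bool" where
  "lin_on sc A f \<longleftrightarrow> f ` carrierC A \<subseteq> carrierC A \<and>
     (\<forall>x\<in>carrierC A. \<forall>y\<in>carrierC A. f (x + y) = f x + f y) \<and>
     (\<forall>r. \<forall>x\<in>carrierC A. f (lscale sc r x) = lscale sc r (f x))"

definition bigraded_complex where
  "bigraded_complex sc A d d21 d10 d01 \<longleftrightarrow>
     left_module sc \<and>
     (\<forall>p q. is_submod sc (A p q)) \<and>
     (\<forall>p q. p < 0 \<or> q < 0 \<longrightarrow> A p q = {0}) \<and>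
     lin_on sc A d \<and> lin_on sc A d21 \<and> lin_on sc A d10 \<and> lin_on sc A d01 \<and>
     (\<forall>p q. d21 ` Cpq A p q \<subseteq> Cpq A (p + 2) (q - 1)) \<and>
     (\<forall>p q. d10 ` Cpq A p q \<subseteq> Cpq A (p + 1) q) \<and>
     (\<forall>p q. d01 ` Cpq A p q \<subseteq> Cpq A p (q + 1)) \<and>
     (\<forall>x\<in>carrierC A. d x = d21 x + d10 x + d01 x) \<and>
     (\<forall>k. d ` Ck A k \<subseteq> Ck A (k + 1)) \<and>
     (\<forall>x\<in>carrierC A. d (d x) = 0)"

definition Npq where
  "Npq A d21 d01 p q = {x \<in> Cpq A p q. d01 x = 0 \<and> d21 x = 0}"

text \<open>B^{k+1}(N_j, dbar): image of the degree-k part N^{k-j,j} of N_j\<close>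
definition BN where
  "BN A d d21 d01 k j = d ` Npq A d21 d01 (k - j) j"

definition Mk where
  "Mk A d d21 d01 k = {\<eta> \<in> Ck A k. \<forall>i j. i + j = k + 1 \<longrightarrow> comp (d \<eta>) i j \<in> BN A d d21 d01 k j}"

definition Zkq where
  "Zkq A d d21 d01 k q = {proj q \<eta> | \<eta>. \<eta> \<in> Mk A d d21 d01 k \<and> proj q (d \<eta>) = 0}"

definition Bkq where
  "Bkq A d k q = proj q ` (d ` Ck A (k - 1))"

text \<open>Quotients as sets of cosets\<close>
definition coset :: "'a::plus set \<Rightarrow> 'a \<Rightarrow> 'a set" where
  "coset T z = (\<lambda>t. z + t) ` T"

definition cosets :: "'a::plus set \<Rightarrow> 'a set \<Rightarrow> 'a set set" where
  "cosets S T = coset T ` S"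

definition qmap :: "('a \<Rightarrow> 'b::plus) \<Rightarrow> 'b set \<Rightarrow> 'a set \<Rightarrow> 'b set" where
  "qmap f T X = coset T (f (SOME x. x \<in> X))"

definition short_exact :: "('a \<Rightarrow> 'b) \<Rightarrow> ('b \<Rightarrow> 'c) \<Rightarrow> 'c \<Rightarrow> 'a set \<Rightarrow> 'b set \<Rightarrow> 'c set \<Rightarrow> bool" where
  "short_exact f g zW X Y W \<longleftrightarrow> inj_on f X \<and> f ` X = {y \<in> Y. g y = zW} \<and> g ` Y = W"

end

theory Submission
  imports Defs
begin

text \<open>
  All objects are submodules of the total complex, being images and preimages of submodules
  under the linear maps d, pi_q and the component projections. On B^k_q and Z^k_q, which lie in
  C^k and are fixed by pi_q, the kernel of pi_(q+1) is the part concentrated in bidegree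
  (k - q, q); this gives the left halves of the top two rows. Since pi_(q+1) pi_q = pi_(q+1),
  pi_(q+1) maps B^k_q onto B^k_(q+1). Surjectivity onto Z^k_(q+1) is the heart of the matter: if
  eta is in M^k and pi_(q+1)(d eta) = 0, the only obstruction to pi_q(d eta) = 0 is the component
  (d eta)_(p+1,q), which by definition of M^k equals d n for some n in N^(p,q); as d acts on
  N^(p,q) as d_(1,0), n lies in M^k, and eta - n has the same image under pi_(q+1) and satisfies
  pi_q(d(eta - n)) = 0. The bottom row follows from the top two by the elementary fact that a
  homomorphism mapping a subgroup B of Z onto B' and Z onto Z' induces a short exact sequence of
  quotients with kernels taken in B and Z.
\<close>

definition add_subgroup :: "'a::ab_group_add set \<Rightarrow> bool" where
  "add_subgroup T \<longleftrightarrow> 0 \<in> T \<and> (\<forall>x\<in>T. \<forall>y\<in>T. x + y \<in> T) \<and> (\<forall>x\<in>T. - x \<in> T)"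

lemma add_subgroup_diff: "add_subgroup T \<Longrightarrow> x \<in> T \<Longrightarrow> y \<in> T \<Longrightarrow> x - y \<in> T"
  unfolding add_subgroup_def by (metis diff_conv_add_uminus)

lemma mem_coset_iff: "(x::'a::ab_group_add) \<in> coset T z \<longleftrightarrow> x - z \<in> T"
  unfolding coset_def by (auto intro: image_eqI[where x = "x - z"])

lemma coset_eq_iff:
  assumes "add_subgroup T"
  shows "coset T x = coset T y \<longleftrightarrow> x - y \<in> T"
proof
  assume "coset T x = coset T y"
  moreover have "x \<in> coset T x" using assms by (simp add: mem_coset_iff add_subgroup_def)
  ultimately show "x - y \<in> T" by (simp add: mem_coset_iff)
next
  assume xy: "x - y \<in> T"
  have "w - x \<in> T \<longleftrightarrow> w - y \<in> T" for w
  proof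
    assume "w - x \<in> T"
    with xy have "(w - x) + (x - y) \<in> T" using assms unfolding add_subgroup_def by blast
    then show "w - y \<in> T" by simp
  next
    assume "w - y \<in> T"
    from add_subgroup_diff[OF assms this xy] show "w - x \<in> T" by simp
  qed
  then show "coset T x = coset T y" by (auto simp: mem_coset_iff)
qed

lemma qmap_coset:
  fixes f :: "'a::ab_group_add \<Rightarrow> 'b::ab_group_add"
  assumes f_diff: "\<And>x y. f (x - y) = f x - f y"
    and "add_subgroup T'" "0 \<in> T" "f ` T \<subseteq> T'"
  shows "qmap f T' (coset T z) = coset T' (f z)"
proof -
  have "z \<in> coset T z" using assms(3) by (simp add: mem_coset_iff)
  hence "(SOME x. x \<in> coset T z) - z \<in> T" by (metis someI mem_coset_iff)
  hence "f (SOME x. x \<in> coset T z) - f z \<in> T'" using assms(4) f_diff by (metis image_subset_iff)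
  thus ?thesis unfolding qmap_def using coset_eq_iff[OF assms(2)] by blast
qed

lemma short_exact_kernel: "short_exact id f 0 {y \<in> Y. f y = 0} Y (f ` Y)"
  unfolding short_exact_def by simp

lemma short_exact_cosets:
  assumes "add_subgroup T" "T \<subseteq> S"
  shows "short_exact id (coset T) (coset T 0) T S (cosets S T)"
  using assms coset_eq_iff[OF assms(1)] unfolding short_exact_def cosets_def by auto

lemma hom_diff_imp_additive:
  fixes f :: "'a::ab_group_add \<Rightarrow> 'b::ab_group_add"
  assumes f_diff: "\<And>x y. f (x - y) = f x - f y"
  shows "f 0 = 0" and "f (- x) = - f x" and "f (x + y) = f x + f y"
proof -
  show f0: "f 0 = 0" using f_diff[of 0 0] by simp
  show fm: "f (- x) = - f x" for x using f_diff[of 0 x] f0 by simp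
  show "f (x + y) = f x + f y" using f_diff[of x "- y"] fm by simp
qed

lemma add_subgroup_kernel:
  fixes f :: "'a::ab_group_add \<Rightarrow> 'b::ab_group_add"
  assumes "\<And>x y. f (x - y) = f x - f y" and "add_subgroup B"
  shows "add_subgroup {b \<in> B. f b = 0}"
  using assms(2) hom_diff_imp_additive[of f, OF assms(1)] unfolding add_subgroup_def by auto

lemma short_exact_quotients:
  fixes f :: "'a::ab_group_add \<Rightarrow> 'b::ab_group_add"
  assumes f_diff: "\<And>x y. f (x - y) = f x - f y"
    and B: "add_subgroup B" and Z: "add_subgroup Z" and "B \<subseteq> Z" and B': "add_subgroup B'"
    and fB: "f ` B = B'" and fZ: "f ` Z = Z'"
  defines "KB \<equiv> {b \<in> B. f b = 0}" and "KZ \<equiv> {z \<in> Z. f z = 0}"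
  shows "short_exact (qmap id B) (qmap f B') (coset B' 0) (cosets KZ KB) (cosets Z B) (cosets Z' B')"
proof -
  have f0: "f 0 = 0" by (rule hom_diff_imp_additive(1)[of f, OF f_diff])
  have qid: "qmap id B (coset KB z) = coset B z" for z
    using qmap_coset[of id B KB] B f0 by (auto simp: KB_def add_subgroup_def)
  have qf: "qmap f B' (coset B z) = coset B' (f z)" for z
    by (rule qmap_coset[of f, OF f_diff B']) (use B fB in \<open>auto simp: add_subgroup_def\<close>)
  have "inj_on (qmap id B) (cosets KZ KB)"
  proof (rule inj_onI)
    fix X Y assume "X \<in> cosets KZ KB" "Y \<in> cosets KZ KB" "qmap id B X = qmap id B Y"
    then obtain z z' where z: "z \<in> KZ" "z' \<in> KZ" "X = coset KB z" "Y = coset KB z'"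
      and "z - z' \<in> B" using coset_eq_iff[OF B] by (auto simp: cosets_def qid)
    then have "z - z' \<in> KB" using f_diff by (simp add: KB_def KZ_def)
    moreover have "add_subgroup KB" unfolding KB_def by (rule add_subgroup_kernel[OF f_diff B])
    ultimately show "X = Y" using z coset_eq_iff by metis
  qed
  moreover have "qmap id B ` cosets KZ KB = {Y \<in> cosets Z B. qmap f B' Y = coset B' 0}"
  proof (intro set_eqI iffI)
    fix Y assume "Y \<in> qmap id B ` cosets KZ KB"
    then show "Y \<in> {Y \<in> cosets Z B. qmap f B' Y = coset B' 0}"
      by (auto simp: cosets_def qid qf KZ_def)
  next
    fix Y assume "Y \<in> {Y \<in> cosets Z B. qmap f B' Y = coset B' 0}"
    then obtain z where z: "z \<in> Z" "Y = coset B z" "f z \<in> B'"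
      using coset_eq_iff[OF B'] by (auto simp: cosets_def qf)
    then obtain b where b: "b \<in> B" "f z = f b" using fB by auto
    have "z - b \<in> KZ" using z b assms(4) add_subgroup_diff[OF Z] f_diff by (auto simp: KZ_def)
    moreover have "Y = coset B (z - b)" using z b coset_eq_iff[OF B] by simp
    ultimately show "Y \<in> qmap id B ` cosets KZ KB" unfolding cosets_def image_image qid by blast
  qed
  moreover have "qmap f B' ` cosets Z B = cosets Z' B'"
    by (simp add: cosets_def image_image qf flip: fZ)
  ultimately show ?thesis unfolding short_exact_def by blast
qed

definition module_hom_on :: "('r \<Rightarrow> 'a::ab_group_add \<Rightarrow> 'a) \<Rightarrow> 'a set \<Rightarrow> ('a \<Rightarrow> 'a) \<Rightarrow> bool" where
  "module_hom_on L S f \<longleftrightarrow>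
     (\<forall>x\<in>S. \<forall>y\<in>S. f (x + y) = f x + f y) \<and> (\<forall>r. \<forall>x\<in>S. f (L r x) = L r (f x))"

lemma module_hom_on_zero: "is_submod L S \<Longrightarrow> module_hom_on L S f \<Longrightarrow> f 0 = 0"
  unfolding is_submod_def module_hom_on_def by (metis add_cancel_right_right add_0)

lemma module_hom_on_diff:
  assumes "add_subgroup S" "module_hom_on L S f" "x \<in> S" "y \<in> S"
  shows "f (x - y) = f x - f y"
proof -
  have "f (x - y + y) = f (x - y) + f y"
    using assms add_subgroup_diff[OF assms(1)] unfolding module_hom_on_def by blast
  then show ?thesis by (simp add: algebra_simps)
qed

lemma module_hom_on_subset: "module_hom_on L S f \<Longrightarrow> S' \<subseteq> S \<Longrightarrow> module_hom_on L S' f"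
  unfolding module_hom_on_def by blast

lemma module_hom_on_comp:
  "module_hom_on L S f \<Longrightarrow> f ` S \<subseteq> S' \<Longrightarrow> module_hom_on L S' g \<Longrightarrow> module_hom_on L S (g \<circ> f)"
  unfolding module_hom_on_def by (simp add: image_subset_iff)

lemma submod_Int: "is_submod L S \<Longrightarrow> is_submod L T \<Longrightarrow> is_submod L (S \<inter> T)"
  unfolding is_submod_def by blast

lemma submod_image:
  assumes S: "is_submod L S" and f: "module_hom_on L S f"
  shows "is_submod L (f ` S)"
  unfolding is_submod_def
proof (intro conjI ballI allI)
  show "0 \<in> f ` S" using S module_hom_on_zero[OF S f] by (metis image_eqI is_submod_def)
  fix x y assume "x \<in> f ` S" "y \<in> f ` S"
  then obtain a b where "a \<in> S" "b \<in> S" "x = f a" "y = f b" by blast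
  then show "x + y \<in> f ` S" using S f unfolding is_submod_def module_hom_on_def by (metis image_eqI)
next
  fix r x assume "x \<in> f ` S"
  then obtain a where "a \<in> S" "x = f a" by blast
  then show "L r x \<in> f ` S" using S f unfolding is_submod_def module_hom_on_def by (metis image_eqI)
qed

lemma submod_preimage_all:
  assumes S: "is_submod L S" and T: "\<And>i. is_submod L (T i)" and f: "\<And>i. module_hom_on L S (f i)"
  shows "is_submod L {x \<in> S. \<forall>i. P i \<longrightarrow> f i x \<in> T i}"
  using S T f module_hom_on_zero[OF S f] unfolding is_submod_def module_hom_on_def by simp

lemma submod_preimage:
  "is_submod L S \<Longrightarrow> is_submod L T \<Longrightarrow> module_hom_on L S f \<Longrightarrow> is_submod L {x \<in> S. f x \<in> T}"
  using submod_preimage_all[of L S "\<lambda>_::unit. T" "\<lambda>_. f" "\<lambda>_. True"] by simp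

locale bigraded_cochain_complex =
  fixes sc :: "'r::ring_1 \<Rightarrow> 'm::ab_group_add \<Rightarrow> 'm"
    and A :: "int \<Rightarrow> int \<Rightarrow> 'm set"
    and d d21 d10 d01 :: "(int \<Rightarrow> int \<Rightarrow> 'm) \<Rightarrow> (int \<Rightarrow> int \<Rightarrow> 'm)"
  assumes complex: "bigraded_complex sc A d d21 d10 d01"
begin

lemma
  shows left_module: "left_module sc"
    and A_submod_all: "\<forall>p q. is_submod sc (A p q)"
    and lin_d: "lin_on sc A d" and lin_d21: "lin_on sc A d21" and lin_d01: "lin_on sc A d01"
    and d10_Cpq_all: "\<forall>p q. d10 ` Cpq A p q \<subseteq> Cpq A (p + 1) q"
    and d_split: "\<forall>x\<in>carrierC A. d x = d21 x + d10 x + d01 x"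
    and d_Ck_all: "\<forall>k. d ` Ck A k \<subseteq> Ck A (k + 1)"
    and d_d_all: "\<forall>x\<in>carrierC A. d (d x) = 0"
  using complex unfolding bigraded_complex_def by - (elim conjE, assumption)+

lemma sc_zero_right: "sc r 0 = 0"
proof -
  have "sc r (0 + 0) = sc r 0 + sc r 0" using left_module unfolding left_module_def by blast
  then show ?thesis by simp
qed

lemma sc_minus_one: "sc (- 1) x = - x"
proof -
  have "sc (- 1 + 1) x = sc (- 1) x + sc 1 x" "sc 1 x = x" "sc (0 + 0) x = sc 0 x + sc 0 x"
    using left_module unfolding left_module_def by blast+
  then show ?thesis by (simp add: eq_neg_iff_add_eq_0)
qed

lemma lscale_minus_one: "lscale sc (- 1) x = - x"
  by (simp add: lscale_def sc_minus_one fun_eq_iff)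

lemma submod_add_subgroup: "is_submod (lscale sc) S \<Longrightarrow> add_subgroup S"
  unfolding is_submod_def add_subgroup_def by (metis lscale_minus_one)

lemma submod_diff: "is_submod (lscale sc) S \<Longrightarrow> x \<in> S \<Longrightarrow> y \<in> S \<Longrightarrow> x - y \<in> S"
  by (metis add_subgroup_diff submod_add_subgroup)

lemma submod_zero: "is_submod (lscale sc) {0}"
  by (simp add: is_submod_def lscale_def sc_zero_right fun_eq_iff)

lemma module_hom_on_proj: "module_hom_on (lscale sc) S (proj q)"
  by (simp add: module_hom_on_def proj_def lscale_def fun_eq_iff sc_zero_right)

lemma module_hom_on_comp_component: "module_hom_on (lscale sc) S (\<lambda>x. comp x i j)"
  by (simp add: module_hom_on_def comp_def lscale_def fun_eq_iff sc_zero_right)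

lemma A_submod: "is_submod sc (A p q)"
  using A_submod_all by blast

lemma carrierC_submod: "is_submod (lscale sc) (carrierC A)"
  unfolding is_submod_def
proof (intro conjI ballI allI)
  show "0 \<in> carrierC A" using A_submod by (simp add: carrierC_def is_submod_def)
next
  fix x y assume x: "x \<in> carrierC A" and y: "y \<in> carrierC A"
  then have "x p q + y p q \<in> A p q" for p q using A_submod unfolding carrierC_def is_submod_def by blast
  moreover have "finite {(p, q). (x + y) p q \<noteq> 0}"
  proof (rule finite_subset)
    show "finite ({(p, q). x p q \<noteq> 0} \<union> {(p, q). y p q \<noteq> 0})"
      using x y by (simp add: carrierC_def)
  qed auto
  ultimately show "x + y \<in> carrierC A" unfolding carrierC_def mem_Collect_eq plus_fun_apply by blast
next
  fix r x assume x: "x \<in> carrierC A"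
  then have "sc r (x p q) \<in> A p q" for p q using A_submod unfolding carrierC_def is_submod_def by blast
  moreover have "finite {(p, q). lscale sc r x p q \<noteq> 0}"
  proof (rule finite_subset)
    show "finite {(p, q). x p q \<noteq> 0}" using x by (simp add: carrierC_def)
  qed (auto simp: lscale_def sc_zero_right)
  ultimately show "lscale sc r x \<in> carrierC A" unfolding carrierC_def mem_Collect_eq lscale_def by blast
qed

lemma module_hom_on_lin_on: "lin_on sc A f \<Longrightarrow> module_hom_on (lscale sc) (carrierC A) f"
  by (simp add: lin_on_def module_hom_on_def)

lemma module_hom_on_d: "module_hom_on (lscale sc) (carrierC A) d"
  by (rule module_hom_on_lin_on[OF lin_d])

lemma module_hom_on_d_subset: "S \<subseteq> carrierC A \<Longrightarrow> module_hom_on (lscale sc) S d"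
  by (rule module_hom_on_subset[OF module_hom_on_d])

lemma d_diff: "x \<in> carrierC A \<Longrightarrow> y \<in> carrierC A \<Longrightarrow> d (x - y) = d x - d y"
  by (rule module_hom_on_diff[OF submod_add_subgroup[OF carrierC_submod] module_hom_on_d])

lemma d_Ck: "x \<in> Ck A k \<Longrightarrow> d x \<in> Ck A (k + 1)"
  using d_Ck_all by blast

lemma d_d: "x \<in> carrierC A \<Longrightarrow> d (d x) = 0"
  using d_d_all by blast

lemma Ck_subset_carrierC: "Ck A k \<subseteq> carrierC A"
  by (auto simp: Ck_def)

lemma Cpq_subset_carrierC: "Cpq A p q \<subseteq> carrierC A"
  by (auto simp: Cpq_def)

lemma Cpq_subset_Ck: "Cpq A p q \<subseteq> Ck A (p + q)"
  by (auto simp: Cpq_def Ck_def)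

lemma Ck_submod: "is_submod (lscale sc) (Ck A k)"
  using carrierC_submod by (auto simp: is_submod_def Ck_def lscale_def sc_zero_right)

lemma Cpq_submod: "is_submod (lscale sc) (Cpq A p q)"
  using carrierC_submod by (auto simp: is_submod_def Cpq_def lscale_def sc_zero_right)

lemma proj_carrierC: "x \<in> carrierC A \<Longrightarrow> proj q x \<in> carrierC A"
proof -
  assume x: "x \<in> carrierC A"
  have "finite {(i, j). proj q x i j \<noteq> 0}"
    by (rule finite_subset[of _ "{(i, j). x i j \<noteq> 0}"]) (use x in \<open>auto simp: proj_def carrierC_def\<close>)
  moreover have "proj q x i j \<in> A i j" for i j
    using x A_submod by (simp add: carrierC_def is_submod_def proj_def)
  ultimately show ?thesis by (simp add: carrierC_def)
qed

lemma proj_Ck: "x \<in> Ck A k \<Longrightarrow> proj q x \<in> Ck A k"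
  using proj_carrierC by (simp add: Ck_def proj_def)

lemma proj_Cpq: "x \<in> Cpq A p q \<Longrightarrow> proj q x = x"
  by (auto simp: Cpq_def proj_def fun_eq_iff)

lemma proj_Suc_Cpq: "x \<in> Cpq A p q \<Longrightarrow> proj (q + 1) x = 0"
  by (auto simp: Cpq_def proj_def fun_eq_iff)

lemma proj_proj: "a \<le> b \<Longrightarrow> proj b (proj a x) = proj b x"
  by (simp add: proj_def fun_eq_iff)

lemma proj_diff: "proj q (x - y) = proj q x - proj q (y :: int \<Rightarrow> int \<Rightarrow> 'm)"
  by (auto simp: proj_def fun_eq_iff)

lemma proj_zero: "proj q 0 = 0"
  by (simp add: proj_def fun_eq_iff)

lemma comp_zero: "comp 0 i j = 0"
  by (simp add: comp_def fun_eq_iff)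

lemma proj_eq_comp:
  assumes "y \<in> Ck A m" and "proj (q + 1) y = 0"
  shows "proj q y = comp y (m - q) q"
proof -
  have "y i j = 0" if "q \<le> j" "(i, j) \<noteq> (m - q, q)" for i j
  proof (cases "j = q")
    case True
    then show ?thesis using assms(1) that by (auto simp: Ck_def)
  next
    case False
    then show ?thesis using fun_cong[OF fun_cong[OF assms(2)], of i j] that by (simp add: proj_def)
  qed
  then show ?thesis by (auto simp: fun_eq_iff proj_def comp_def)
qed

lemma Cpq_kernel_proj_Suc:
  assumes "S \<subseteq> Ck A (p + q)" and "\<And>y. y \<in> S \<Longrightarrow> proj q y = y"
  shows "{y \<in> S. proj (q + 1) y = 0} = S \<inter> Cpq A p q"
proof (intro set_eqI iffI)
  fix y assume "y \<in> {y \<in> S. proj (q + 1) y = 0}"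
  then have y: "y \<in> Ck A (p + q)" "proj q y = y" "proj (q + 1) y = 0" using assms by auto
  have yc: "y = comp y p q" using proj_eq_comp[OF y(1,3)] y(2) by simp
  have "y i j = 0" if "(i, j) \<noteq> (p, q)" for i j
    using that by (subst yc) (auto simp: comp_def)
  then show "y \<in> S \<inter> Cpq A p q"
    using y(1) \<open>y \<in> {y \<in> S. proj (q + 1) y = 0}\<close> by (auto simp: Cpq_def Ck_def)
qed (auto simp: proj_Suc_Cpq)

lemma Npq_submod: "is_submod (lscale sc) (Npq A d21 d01 p q)"
proof -
  have hom: "module_hom_on (lscale sc) S f" if "lin_on sc A f" "S \<subseteq> Cpq A p q" for f S
    using module_hom_on_lin_on[OF that(1)] Cpq_subset_carrierC that(2)
    by (blast intro: module_hom_on_subset)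
  have "Npq A d21 d01 p q = {x \<in> {x \<in> Cpq A p q. d01 x \<in> {0}}. d21 x \<in> {0}}"
    by (auto simp: Npq_def)
  also have "is_submod (lscale sc) \<dots>"
    by (intro submod_preimage Cpq_submod submod_zero hom[OF lin_d01] hom[OF lin_d21]) auto
  finally show ?thesis .
qed

lemma BN_submod: "is_submod (lscale sc) (BN A d d21 d01 k j)"
  unfolding BN_def
proof (rule submod_image[OF Npq_submod])
  show "module_hom_on (lscale sc) (Npq A d21 d01 (k - j) j) d"
    by (rule module_hom_on_d_subset) (auto simp: Npq_def Cpq_def)
qed

lemma Mk_submod: "is_submod (lscale sc) (Mk A d d21 d01 k)"
proof -
  have "Mk A d d21 d01 k = {\<eta> \<in> Ck A k. \<forall>ij. fst ij + snd ij = k + 1 \<longrightarrow>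
      ((\<lambda>y. comp y (fst ij) (snd ij)) \<circ> d) \<eta> \<in> BN A d d21 d01 k (snd ij)}"
    by (auto simp: Mk_def)
  also have "is_submod (lscale sc) \<dots>"
  proof (rule submod_preimage_all[OF Ck_submod BN_submod])
    show "module_hom_on (lscale sc) (Ck A k) ((\<lambda>y. comp y (fst ij) (snd ij)) \<circ> d)" for ij
      by (rule module_hom_on_comp[of _ _ _ UNIV, OF module_hom_on_d_subset[OF Ck_subset_carrierC]
            subset_UNIV module_hom_on_comp_component])
  qed
  finally show ?thesis .
qed

lemma Bkq_submod: "is_submod (lscale sc) (Bkq A d k q)"
  unfolding Bkq_def
  by (intro submod_image Ck_submod module_hom_on_proj module_hom_on_d_subset Ck_subset_carrierC)

lemma Zkq_submod: "is_submod (lscale sc) (Zkq A d d21 d01 k q)"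
proof -
  have "Zkq A d d21 d01 k q = proj q ` {\<eta> \<in> Mk A d d21 d01 k. (proj q \<circ> d) \<eta> \<in> {0}}"
    by (auto simp: Zkq_def)
  also have "is_submod (lscale sc) \<dots>"
  proof (intro submod_image submod_preimage Mk_submod submod_zero module_hom_on_proj)
    have "Mk A d d21 d01 k \<subseteq> carrierC A" using Ck_subset_carrierC by (auto simp: Mk_def)
    then have "module_hom_on (lscale sc) (Mk A d d21 d01 k) d" by (rule module_hom_on_d_subset)
    then show "module_hom_on (lscale sc) (Mk A d d21 d01 k) (proj q \<circ> d)"
      by (rule module_hom_on_comp[OF _ subset_UNIV module_hom_on_proj])
  qed
  finally show ?thesis .
qed

lemma Bkq_subset_Ck: "Bkq A d k q \<subseteq> Ck A k"
  unfolding Bkq_def using d_Ck proj_Ck by fastforce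

lemma Zkq_subset_Ck: "Zkq A d d21 d01 k q \<subseteq> Ck A k"
  unfolding Zkq_def Mk_def using proj_Ck by fastforce

lemma proj_Bkq_eq: "y \<in> Bkq A d k q \<Longrightarrow> proj q y = y"
  unfolding Bkq_def using proj_proj by auto

lemma proj_Zkq_eq: "y \<in> Zkq A d d21 d01 k q \<Longrightarrow> proj q y = y"
  unfolding Zkq_def using proj_proj by auto

lemma Bkq_subset_Zkq: "Bkq A d k q \<subseteq> Zkq A d d21 d01 k q"
proof
  fix y assume "y \<in> Bkq A d k q"
  then obtain x where x: "x \<in> Ck A (k - 1)" "y = proj q (d x)" unfolding Bkq_def by auto
  have dd: "d (d x) = 0" using d_d x(1) Ck_subset_carrierC by blast
  have "0 \<in> BN A d d21 d01 k j" for j using BN_submod by (simp add: is_submod_def)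
  then have "d x \<in> Mk A d d21 d01 k" using d_Ck[OF x(1)] unfolding Mk_def by (simp add: dd comp_zero)
  moreover have "proj q (d (d x)) = 0" by (simp add: dd proj_zero)
  ultimately show "y \<in> Zkq A d d21 d01 k q" unfolding Zkq_def x(2) by blast
qed

lemma image_proj_Bkq: "proj (q + 1) ` Bkq A d k q = Bkq A d k (q + 1)"
  unfolding Bkq_def image_image by (simp add: proj_proj)

lemma d_Npq: "n \<in> Npq A d21 d01 p q \<Longrightarrow> d n \<in> Cpq A (p + 1) q"
proof -
  assume n: "n \<in> Npq A d21 d01 p q"
  then have "n \<in> carrierC A" using Cpq_subset_carrierC by (auto simp: Npq_def)
  then have "d n = d21 n + d10 n + d01 n" using d_split by blast
  moreover have "d10 n \<in> Cpq A (p + 1) q" using d10_Cpq_all n unfolding Npq_def by blast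
  ultimately show ?thesis using n unfolding Npq_def by simp
qed

lemma comp_Cpq: "x \<in> Cpq A p q \<Longrightarrow> comp x i j = (if (i, j) = (p, q) then x else 0)"
  by (auto simp: Cpq_def comp_def fun_eq_iff)

lemma Npq_subset_Mk: "Npq A d21 d01 p q \<subseteq> Mk A d d21 d01 (p + q)"
proof
  fix n assume n: "n \<in> Npq A d21 d01 p q"
  have "d n \<in> BN A d d21 d01 (p + q) q" using n by (simp add: BN_def)
  moreover have "0 \<in> BN A d d21 d01 (p + q) j" for j using BN_submod by (simp add: is_submod_def)
  ultimately have "comp (d n) i j \<in> BN A d d21 d01 (p + q) j" for i j
    using comp_Cpq[OF d_Npq[OF n]] by auto
  moreover have "n \<in> Ck A (p + q)" using n Cpq_subset_Ck by (auto simp: Npq_def)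
  ultimately show "n \<in> Mk A d d21 d01 (p + q)" unfolding Mk_def by blast
qed

lemma image_proj_Zkq: "proj (q + 1) ` Zkq A d d21 d01 k q = Zkq A d d21 d01 k (q + 1)"
proof (intro equalityI subsetI)
  fix z assume "z \<in> proj (q + 1) ` Zkq A d d21 d01 k q"
  then obtain \<eta> where \<eta>: "\<eta> \<in> Mk A d d21 d01 k" "proj q (d \<eta>) = 0" "z = proj (q + 1) (proj q \<eta>)"
    unfolding Zkq_def by blast
  have "proj (q + 1) (d \<eta>) = 0"
    using arg_cong[OF \<eta>(2), of "proj (q + 1)"] by (simp add: proj_proj proj_zero)
  moreover have "z = proj (q + 1) \<eta>" using \<eta>(3) by (simp add: proj_proj)
  ultimately show "z \<in> Zkq A d d21 d01 k (q + 1)" using \<eta>(1) unfolding Zkq_def by blast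
next
  fix z assume "z \<in> Zkq A d d21 d01 k (q + 1)"
  then obtain \<eta> where \<eta>: "\<eta> \<in> Mk A d d21 d01 k" "proj (q + 1) (d \<eta>) = 0" "z = proj (q + 1) \<eta>"
    unfolding Zkq_def by blast
  define p where "p = k - q"
  have \<eta>C: "\<eta> \<in> carrierC A" "d \<eta> \<in> Ck A (k + 1)"
    using \<eta>(1) d_Ck Ck_subset_carrierC by (auto simp: Mk_def)
  have "comp (d \<eta>) (p + 1) q \<in> BN A d d21 d01 k q" using \<eta>(1) by (simp add: Mk_def p_def)
  then obtain n where n: "n \<in> Npq A d21 d01 p q" "d n = comp (d \<eta>) (p + 1) q"
    unfolding BN_def p_def by (auto elim!: imageE)
  have nC: "n \<in> Cpq A p q" using n(1) by (simp add: Npq_def)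
  have "n \<in> Mk A d d21 d01 k" using Npq_subset_Mk[of p q] n(1) by (auto simp: p_def)
  then have "\<eta> - n \<in> Mk A d d21 d01 k" by (rule submod_diff[OF Mk_submod \<eta>(1)])
  moreover have "proj q (d (\<eta> - n)) = 0"
  proof -
    have "d (\<eta> - n) = d \<eta> - d n" using d_diff \<eta>C(1) nC Cpq_subset_carrierC by blast
    moreover have "proj q (d \<eta>) = comp (d \<eta>) (p + 1) q"
      using proj_eq_comp[OF \<eta>C(2) \<eta>(2)] by (simp add: p_def algebra_simps)
    moreover have "proj q (d n) = d n" using proj_Cpq[OF d_Npq[OF n(1)]] .
    ultimately show ?thesis using n(2) by (simp add: proj_diff)
  qed
  ultimately have Z: "proj q (\<eta> - n) \<in> Zkq A d d21 d01 k q" unfolding Zkq_def by blast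
  have "z = proj (q + 1) (proj q (\<eta> - n))"
    using \<eta>(3) proj_Suc_Cpq[OF nC] by (simp add: proj_proj proj_diff)
  then show "z \<in> proj (q + 1) ` Zkq A d d21 d01 k q" by (rule rev_image_eqI[OF Z])
qed

end

theorem theorem3p3:
  fixes sc :: "'r::ring_1 \<Rightarrow> 'm::ab_group_add \<Rightarrow> 'm"
    and A :: "int \<Rightarrow> int \<Rightarrow> 'm set"
    and d d21 d10 d01 :: "(int \<Rightarrow> int \<Rightarrow> 'm) \<Rightarrow> (int \<Rightarrow> int \<Rightarrow> 'm)"
    and p q k :: int
  assumes cx: "bigraded_complex sc A d d21 d10 d01"
    and pq: "p + q = k"
  defines "Bq \<equiv> Bkq A d k q" and "Bq1 \<equiv> Bkq A d k (q + 1)"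
    and "Zq \<equiv> Zkq A d d21 d01 k q" and "Zq1 \<equiv> Zkq A d d21 d01 k (q + 1)"
    and "BC \<equiv> Bkq A d k q \<inter> Cpq A p q" and "ZC \<equiv> Zkq A d d21 d01 k q \<inter> Cpq A p q"
  shows
    \<comment> \<open>all objects are R-submodules of C\<close>
    "is_submod (lscale sc) Bq \<and> is_submod (lscale sc) Bq1 \<and>
     is_submod (lscale sc) Zq \<and> is_submod (lscale sc) Zq1 \<and>
     is_submod (lscale sc) BC \<and> is_submod (lscale sc) ZC \<and>
     \<comment> \<open>rows: top, middle, bottom\<close>
     short_exact id (proj (q + 1)) 0 BC Bq Bq1 \<and>
     short_exact id (proj (q + 1)) 0 ZC Zq Zq1 \<and>
     short_exact (qmap id Bq) (qmap (proj (q + 1)) Bq1) (coset Bq1 0)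
       (cosets ZC BC) (cosets Zq Bq) (cosets Zq1 Bq1) \<and>
     \<comment> \<open>columns: inclusions followed by canonical projections\<close>
     short_exact id (coset BC) (coset BC 0) BC ZC (cosets ZC BC) \<and>
     short_exact id (coset Bq) (coset Bq 0) Bq Zq (cosets Zq Bq) \<and>
     short_exact id (coset Bq1) (coset Bq1 0) Bq1 Zq1 (cosets Zq1 Bq1) \<and>
     \<comment> \<open>commutativity of the squares\<close>
     (\<forall>b\<in>BC. id (id b) = id (id b)) \<and>
     (\<forall>b\<in>Bq. proj (q + 1) (id b) = id (proj (q + 1) b)) \<and>
     (\<forall>z\<in>ZC. qmap id Bq (coset BC z) = coset Bq (id z)) \<and>
     (\<forall>z\<in>Zq. qmap (proj (q + 1)) Bq1 (coset Bq z) = coset Bq1 (proj (q + 1) z))"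
proof -
  interpret bigraded_cochain_complex sc A d d21 d10 d01 by (rule bigraded_cochain_complex.intro[OF cx])
  have submod: "is_submod (lscale sc) Bq" "is_submod (lscale sc) Bq1" "is_submod (lscale sc) Zq"
    "is_submod (lscale sc) Zq1" "is_submod (lscale sc) BC" "is_submod (lscale sc) ZC"
    unfolding Bq_def Bq1_def Zq_def Zq1_def BC_def ZC_def
    by (intro Bkq_submod Zkq_submod submod_Int Cpq_submod)+
  have kerB: "{y \<in> Bq. proj (q + 1) y = 0} = BC"
    unfolding Bq_def BC_def by (rule Cpq_kernel_proj_Suc) (use Bkq_subset_Ck proj_Bkq_eq pq in auto)
  have kerZ: "{y \<in> Zq. proj (q + 1) y = 0} = ZC"
    unfolding Zq_def ZC_def by (rule Cpq_kernel_proj_Suc) (use Zkq_subset_Ck proj_Zkq_eq pq in auto)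
  have imB: "proj (q + 1) ` Bq = Bq1" and imZ: "proj (q + 1) ` Zq = Zq1"
    unfolding Bq_def Bq1_def Zq_def Zq1_def by (rule image_proj_Bkq image_proj_Zkq)+
  have BZ: "Bq \<subseteq> Zq" "Bq1 \<subseteq> Zq1" "BC \<subseteq> ZC"
    using Bkq_subset_Zkq unfolding Bq_def Bq1_def Zq_def Zq1_def BC_def ZC_def by blast+
  have grp: "add_subgroup Bq" "add_subgroup Bq1" "add_subgroup Zq" "add_subgroup BC"
    using submod by (auto intro: submod_add_subgroup)
  have "qmap id Bq (coset BC z) = coset Bq z" for z
    using qmap_coset[of id Bq BC] grp(1) submod(5) kerB by (auto simp: is_submod_def)
  moreover have "qmap (proj (q + 1)) Bq1 (coset Bq z) = coset Bq1 (proj (q + 1) z)" for z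
    using qmap_coset[of "proj (q + 1)", OF proj_diff grp(2)] submod(1) imB by (auto simp: is_submod_def)
  moreover have "short_exact (qmap id Bq) (qmap (proj (q + 1)) Bq1) (coset Bq1 0)
      (cosets ZC BC) (cosets Zq Bq) (cosets Zq1 Bq1)"
    using short_exact_quotients[of "proj (q + 1)", OF proj_diff grp(1,3) BZ(1) grp(2) imB imZ]
    unfolding kerB kerZ .
  ultimately show ?thesis
    using submod short_exact_kernel[of "proj (q + 1)" Bq] short_exact_kernel[of "proj (q + 1)" Zq]
      short_exact_cosets[OF grp(4) BZ(3)] short_exact_cosets[OF grp(1) BZ(1)]
      short_exact_cosets[OF grp(2) BZ(2)] kerB kerZ imB imZ by simp
qed

end
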